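(* Let $A\in\mathbb{R}^{m\times n}$, $\mathbf b\in\mathbb{R}^m$, and $f(\mathbf x)=\frac12\|A\mathbf x-\mathbf b\|^2$. Suppose the restricted isometry constant satisfies $0<\delta_{2s}<1$, and set $m_{2s}=1-\delta_{2s}$, $M_{2s}=1+\delta_{2s}$, $\mu_{2s}=M_{2s}/m_{2s}$. Run NHTP on $\min\{f(\mathbf x):\|\mathbf x\|_0\le s\}$ with parameters $$\beta=\tfrac14,\quad \sigma=\frac{1-w}{2-w/\mu_{2s}},\quad \gamma=m_{2s},\quad 0<\eta\le\frac{w}{8\mu_{2s}^2},\qquad\text{for some }0<w<1.$$ Then NHTP is well defined, and at every iteration the Newton direction $\mathbf d^k_N$ is accepted as the search direction ($\mathbf d^k=\mathbf d^k_N$). Moreover, if NHTP generates an infinite sequence $\{\mathbf x^k\}$ and $\mathbf x^*$ is an accumulation point of it, then: (i) the whole sequence converges to $\mathbf x^*$, which is an $\eta$-stationary point; (ii) $\mathbf d^k=\mathbf d^k_N$ for all sufficiently large $k$; (iii) for every $L\ge0$ (every such $L$ is a local restricted Hessian Lipschitz constant of $f$ at $\mathbf x^*$) there exists $k_0$ such that for all $k\ge k_0$: $\alpha_k=1$, $\|\mathbf x^{k+1}-\mathbf x^*\|\le\frac{L}{2m_{2s}}\|\mathbf x^k-\mathbf x^*\|^2$, and, for all sufficiently large $k$, $\|F_\eta(\mathbf x^{k+1};T_{k+1})\|\le\frac{L\sqrt{M_{2s}^2+1}}{\min\{m_{2s}^3,m_{2s}\}}\|F_\eta(\mathbf x^k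;T_k)\|^2$.
   Context: The restricted isometry constant $\delta_t$ of $A$ is the smallest $\delta\ge0$ such that $(1-\delta)\|\mathbf x\|^2\le\|A\mathbf x\|^2\le(1+\delta)\|\mathbf x\|^2$ for all $\mathbf x$ with $\|\mathbf x\|_0\le t$ ($\|\cdot\|_0$ = number of nonzeros). Notation: $\mathrm{supp}(\mathbf x)$ = indices of nonzeros; for $T\subseteq\{1,\dots,n\}$, $T^c$ its complement, $\mathbf x_T$ subvector, $\nabla_T f=(\nabla f)_T$, $\nabla^2_{T,J}f$ Hessian submatrix (rows $T$, columns $J$), $\nabla^2_T f=\nabla^2_{T,T}f$; $x_{(s)}$ is the $s$-th largest absolute value of the entries of $\mathbf x$. $\mathcal{P}_s(\mathbf x)=\mathrm{argmin}_{\mathbf z}\{\|\mathbf x-\mathbf z\|:\|\mathbf z\|_0\le s\}$; an $s$-sparse $\mathbf x^*$ is an $\eta$-stationary point if $\mathbf x^*\in\mathcal{P}_s(\mathbf x^*-\eta\nabla f(\mathbf x^* ))$. $\mathcal{T}(\mathbf x;\eta)=\{T:|T|=s,\ T\supseteq\mathrm{supp}(\mathbf z)\text{ for some }\mathbf z\in\mathcal{P}_s(\mathbf x-\eta\nabla f(\mathbf x))\}$; $F_\eta(\mathbf x;T)=(\nabla_T f(\mathbf x);\mathbf x_{T^c})$; $\mathrm{Tol}_\eta(\mathbf x;T)=\|F_\eta(\mathbf x;T)\|+\max_{i\in T^c}\max\{|\nabla_i f(\mathbf x)|-x_{(s)}/\eta,0\}$. Algorithm NHTP (parameters $\eta,\gamma>0$,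 $\sigma\in(0,1/2)$, $\beta\in(0,1)$; initial point $\mathbf x^0$ which is $s$-sparse, and $T_{-1}$ a fixed index set with $|T_{-1}|=s$ and $\mathrm{supp}(\mathbf x^0)\subseteq T_{-1}$). At iteration $k$: choose $T_k\in\mathcal{T}(\mathbf x^k;\eta)$; if $\mathrm{Tol}_\eta(\mathbf x^k;T_k)=0$ stop. Otherwise compute $\mathbf d^k$: the Newton direction $\mathbf d^k_N$ solves $\nabla^2_{T_k}f(\mathbf x^k)(\mathbf d^k_N)_{T_k}=\nabla^2_{T_k,T_k^c}f(\mathbf x^k)\mathbf x^k_{T_k^c}-\nabla_{T_k}f(\mathbf x^k)$, $(\mathbf d^k_N)_{T_k^c}=-\mathbf x^k_{T_k^c}$; set $\mathbf d^k=\mathbf d^k_N$ if $\langle\nabla_{T_k}f(\mathbf x^k),(\mathbf d^k_N)_{T_k}\rangle\le-\gamma\|\mathbf d^k_N\|^2+\frac1{4\eta}\|\mathbf x^k_{T_k^c}\|^2$; otherwise $\mathbf d^k=\mathbf d^k_g$ with $(\mathbf d^k_g)_{T_k}=-\nabla_{T_k}f(\mathbf x^k)$, $(\mathbf d^k_g)_{T_k^c}=-\mathbf x^k_{T_k^c}$. For $\alpha>0$ let $\mathbf x^k(\alpha)$ have $(\mathbf x^k(\alpha))_{T_k}=\mathbf x^k_{T_k}+\alpha\mathbf d^k_{T_k}$ and $(\mathbf x^k(\alpha))_{T_k^c}=0$. Let $\ell\ge0$ be the smallest integer with $f(\mathbf x^k(\beta^\ell))\le f(\mathbf x^k)+\sigma\beta^\ell\langle\nabla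 f(\mathbf x^k),\mathbf d^k\rangle$; set $\alpha_k=\beta^\ell$, $\mathbf x^{k+1}=\mathbf x^k(\alpha_k)$. *)

theory Defs
  imports "HOL-Analysis.Analysis" "HOL-Library.Multiset"
begin

text \<open>Vectors in R^n are real^'n, matrices A in R^(m x n) are real^'n^'m.\<close>

definition l0 :: "real^'n \<Rightarrow> nat" where
  "l0 x = card {i. x$i \<noteq> 0}"

definition supp :: "real^'n \<Rightarrow> 'n set" where
  "supp x = {i. x$i \<noteq> 0}"

definition ric :: "real^'n^'m \<Rightarrow> nat \<Rightarrow> real" where
  "ric A t = Inf {d. 0 \<le> d \<and> (\<forall>x. l0 x \<le> t \<longrightarrow>
        (1 - d) * (norm x)^2 \<le> (norm (A *v x))^2 \<and> (norm (A *v x))^2 \<le> (1 + d) * (norm x)^2)}"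

definition lsq_f :: "real^'n^'m \<Rightarrow> real^'m \<Rightarrow> real^'n \<Rightarrow> real" where
  "lsq_f A b x = (1/2) * (norm (A *v x - b))^2"

definition lsq_grad :: "real^'n^'m \<Rightarrow> real^'m \<Rightarrow> real^'n \<Rightarrow> real^'n" where
  "lsq_grad A b x = transpose A *v (A *v x - b)"

definition lsq_hess :: "real^'n^'m \<Rightarrow> real^'n^'n" where
  "lsq_hess A = transpose A ** A"

definition proj_s :: "nat \<Rightarrow> real^'n \<Rightarrow> (real^'n) set" where
  "proj_s s y = {z. l0 z \<le> s \<and> (\<forall>z'. l0 z' \<le> s \<longrightarrow> norm (y - z) \<le> norm (y - z'))}"

definition eta_stationary :: "real^'n^'m \<Rightarrow> real^'m \<Rightarrow> nat \<Rightarrow> real \<Rightarrow> real^'n \<Rightarrow> bool" where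
  "eta_stationary A b s \<eta> x \<longleftrightarrow> l0 x \<le> s \<and> x \<in> proj_s s (x - \<eta> *\<^sub>R lsq_grad A b x)"

definition Tset :: "real^'n^'m \<Rightarrow> real^'m \<Rightarrow> nat \<Rightarrow> real \<Rightarrow> real^'n \<Rightarrow> ('n set) set" where
  "Tset A b s \<eta> x = {T. card T = s \<and> (\<exists>z\<in>proj_s s (x - \<eta> *\<^sub>R lsq_grad A b x). supp z \<subseteq> T)}"

text \<open>F_eta(x;T) = (grad_T f(x); x_{T^c}), represented (up to a permutation of
  coordinates, which does not change the norm) as the vector whose i-th entry is
  grad_i f(x) for i in T and x_i for i not in T.\<close>
definition Fvec :: "real^'n^'m \<Rightarrow> real^'m \<Rightarrow> real^'n \<Rightarrow> 'n set \<Rightarrow> real^'n" where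
  "Fvec A b x T = (\<chi> i. if i \<in> T then lsq_grad A b x $ i else x $ i)"

text \<open>x_(s): the s-th largest absolute value among the entries of x.\<close>
definition kth_abs :: "real^'n \<Rightarrow> nat \<Rightarrow> real" where
  "kth_abs x s = rev (sorted_list_of_multiset (image_mset (\<lambda>i. \<bar>x$i\<bar>) (mset_set UNIV))) ! (s - 1)"

text \<open>Tol_eta(x;T); the max over an empty complement is taken to be 0.\<close>
definition Tol :: "real^'n^'m \<Rightarrow> real^'m \<Rightarrow> nat \<Rightarrow> real \<Rightarrow> real^'n \<Rightarrow> 'n set \<Rightarrow> real" where
  "Tol A b s \<eta> x T = norm (Fvec A b x T) +
     Max (insert 0 ((\<lambda>i. max (\<bar>lsq_grad A b x $ i\<bar> - kth_abs x s / \<eta>) 0) ` (- T)))"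

definition newton_dir :: "real^'n^'m \<Rightarrow> real^'m \<Rightarrow> real^'n \<Rightarrow> 'n set \<Rightarrow> real^'n \<Rightarrow> bool" where
  "newton_dir A b x T d \<longleftrightarrow>
     (\<forall>i\<in>T. (\<Sum>j\<in>T. lsq_hess A $ i $ j * d $ j) =
             (\<Sum>j\<in>-T. lsq_hess A $ i $ j * x $ j) - lsq_grad A b x $ i) \<and>
     (\<forall>i\<in>-T. d $ i = - x $ i)"

definition newton_accept :: "real^'n^'m \<Rightarrow> real^'m \<Rightarrow> real \<Rightarrow> real \<Rightarrow> real^'n \<Rightarrow> 'n set \<Rightarrow> real^'n \<Rightarrow> bool" where
  "newton_accept A b \<gamma> \<eta> x T d \<longleftrightarrow>
     (\<Sum>i\<in>T. lsq_grad A b x $ i * d $ i) \<le> - \<gamma> * (norm d)^2 + 1 / (4 * \<eta>) * (\<Sum>i\<in>-T. (x $ i)^2)"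

definition grad_dir :: "real^'n^'m \<Rightarrow> real^'m \<Rightarrow> real^'n \<Rightarrow> 'n set \<Rightarrow> real^'n" where
  "grad_dir A b x T = (\<chi> i. if i \<in> T then - lsq_grad A b x $ i else - x $ i)"

definition nhtp_dir :: "real^'n^'m \<Rightarrow> real^'m \<Rightarrow> real \<Rightarrow> real \<Rightarrow> real^'n \<Rightarrow> 'n set \<Rightarrow> real^'n \<Rightarrow> bool" where
  "nhtp_dir A b \<gamma> \<eta> x T d \<longleftrightarrow>
     (newton_dir A b x T d \<and> newton_accept A b \<gamma> \<eta> x T d) \<or>
     ((\<nexists>dN. newton_dir A b x T dN \<and> newton_accept A b \<gamma> \<eta> x T dN) \<and> d = grad_dir A b x T)"

definition step_pt :: "real^'n \<Rightarrow> 'n set \<Rightarrow> real^'n \<Rightarrow> real \<Rightarrow> real^'n" where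
  "step_pt x T d \<alpha> = (\<chi> i. if i \<in> T then x $ i + \<alpha> * d $ i else 0)"

definition armijo :: "real^'n^'m \<Rightarrow> real^'m \<Rightarrow> real \<Rightarrow> real^'n \<Rightarrow> 'n set \<Rightarrow> real^'n \<Rightarrow> real \<Rightarrow> bool" where
  "armijo A b \<sigma> x T d \<alpha> \<longleftrightarrow>
     lsq_f A b (step_pt x T d \<alpha>) \<le> lsq_f A b x + \<sigma> * \<alpha> * (lsq_grad A b x \<bullet> d)"

definition nhtp_iter :: "real^'n^'m \<Rightarrow> real^'m \<Rightarrow> nat \<Rightarrow> real \<Rightarrow> real \<Rightarrow> real \<Rightarrow> real \<Rightarrow>
    real^'n \<Rightarrow> 'n set \<Rightarrow> real^'n \<Rightarrow> real \<Rightarrow> real^'n \<Rightarrow> bool" where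
  "nhtp_iter A b s \<eta> \<gamma> \<sigma> \<beta> x T d \<alpha> x' \<longleftrightarrow>
     T \<in> Tset A b s \<eta> x \<and> Tol A b s \<eta> x T \<noteq> 0 \<and>
     nhtp_dir A b \<gamma> \<eta> x T d \<and>
     (\<exists>l::nat. armijo A b \<sigma> x T d (\<beta> ^ l)) \<and>
     \<alpha> = \<beta> ^ (LEAST l::nat. armijo A b \<sigma> x T d (\<beta> ^ l)) \<and>
     x' = step_pt x T d \<alpha>"

inductive nhtp_reach :: "real^'n^'m \<Rightarrow> real^'m \<Rightarrow> nat \<Rightarrow> real \<Rightarrow> real \<Rightarrow> real \<Rightarrow> real \<Rightarrow>
    real^'n \<Rightarrow> real^'n \<Rightarrow> bool"
  for A b s \<eta> \<gamma> \<sigma> \<beta> x0 where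
  start: "nhtp_reach A b s \<eta> \<gamma> \<sigma> \<beta> x0 x0"
| step: "nhtp_reach A b s \<eta> \<gamma> \<sigma> \<beta> x0 x \<Longrightarrow> nhtp_iter A b s \<eta> \<gamma> \<sigma> \<beta> x T d \<alpha> x' \<Longrightarrow>
         nhtp_reach A b s \<eta> \<gamma> \<sigma> \<beta> x0 x'"

end

theory Submission
  imports Defs
begin

(* Since f is quadratic, the Newton direction at (x, T) is exactly the step from x to the
   stationary point of f restricted to vectors supported on T, and delta_2s < 1 makes that
   point unique.  The RIP bounds show that, for the given parameters, this direction always
   passes the acceptance test and the Armijo test with unit step, and that it strictly
   decreases f unless it vanishes, in which case x is restricted stationary and Tol = 0.
   Hence every iterate after the first is one of finitely many restricted stationary points
   (one per index set T), while f strictly decreases along the iterates: NHTP stops after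
   finitely many steps, and the claims about infinite runs hold vacuously. *)

definition restrict_vec :: "'n set \<Rightarrow> real^'n \<Rightarrow> real^'n" where
  "restrict_vec T w = (\<chi> i. if i \<in> T then w $ i else 0)"

lemma restrict_vec_nth [simp]: "restrict_vec T w $ i = (if i \<in> T then w $ i else 0)"
  by (simp add: restrict_vec_def)

lemma inner_restrict_vec: "u \<bullet> restrict_vec T w = (\<Sum>i\<in>T. u $ i * w $ i)"
  unfolding inner_vec_def by (simp add: if_distrib[of "\<lambda>v. _ * v"] sum.If_cases)

lemma norm_restrict_vec_sq: "(norm (restrict_vec T w))\<^sup>2 = (\<Sum>i\<in>T. (w $ i)\<^sup>2)"
  unfolding power2_norm_eq_inner inner_restrict_vec by (simp add: power2_eq_square)

lemma norm_sq_eq_sum: "(norm w)\<^sup>2 = (\<Sum>i\<in>UNIV. (w $ i)\<^sup>2)"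
  unfolding power2_norm_eq_inner inner_vec_def by (simp add: power2_eq_square)

lemma sum_Compl_split: "sum f UNIV = sum f T + sum f (- T :: 'n::finite set)"
  using sum.union_disjoint[of T "- T" f] by (simp add: Compl_partition)

lemma l0_eq_card_supp: "l0 x = card (supp x)"
  by (simp add: l0_def supp_def)

lemma l0_le_card: "supp x \<subseteq> S \<Longrightarrow> l0 x \<le> card S"
  by (simp add: l0_eq_card_supp card_mono)

lemma supp_subset_iff: "supp x \<subseteq> S \<longleftrightarrow> (\<forall>i\<in>-S. x $ i = 0)"
  by (auto simp: supp_def)

lemma inner_transpose_mv: "x \<bullet> (transpose A *v y) = (A *v x) \<bullet> (y :: real^'m)"
  by (simp only: transpose_matrix_vector inner_commute[of x] dot_lmul_matrix inner_commute[of y])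

lemma lsq_hess_mv: "lsq_hess A *v e = transpose A *v (A *v e)"
  by (simp only: lsq_hess_def matrix_vector_mul_assoc)

lemma inner_lsq_hess: "e \<bullet> (lsq_hess A *v d) = (A *v e) \<bullet> (A *v d)"
  by (simp only: lsq_hess_mv inner_transpose_mv)

lemma lsq_grad_add: "lsq_grad A b (x + d) = lsq_grad A b x + lsq_hess A *v d"
  by (simp add: lsq_grad_def lsq_hess_mv matrix_vector_right_distrib algebra_simps)

lemma lsq_f_add:
  "lsq_f A b (x + d) = lsq_f A b x + lsq_grad A b x \<bullet> d + (norm (A *v d))\<^sup>2 / 2"
proof -
  have "lsq_grad A b x \<bullet> d = (A *v x - b) \<bullet> (A *v d)"
    by (simp only: lsq_grad_def inner_commute[of _ d] inner_transpose_mv inner_commute[of "A *v d"])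
  moreover have "A *v (x + d) - b = (A *v x - b) + A *v d"
    by (simp add: matrix_vector_right_distrib)
  ultimately show ?thesis
    by (simp add: lsq_f_def power2_norm_eq_inner inner_add inner_commute algebra_simps)
qed

lemma inner_eq_0_if_supp_subset: "supp e \<subseteq> T \<Longrightarrow> \<forall>i\<in>T. v $ i = 0 \<Longrightarrow> e \<bullet> v = 0"
  unfolding inner_vec_def supp_subset_iff
  by (intro sum.neutral ballI) (metis ComplI inner_zero_left inner_zero_right)

definition rip :: "real^'n^'m \<Rightarrow> nat \<Rightarrow> real \<Rightarrow> real \<Rightarrow> bool" where
  "rip A t m M \<longleftrightarrow> (\<forall>x. l0 x \<le> t \<longrightarrow>
     m * (norm x)\<^sup>2 \<le> (norm (A *v x))\<^sup>2 \<and> (norm (A *v x))\<^sup>2 \<le> M * (norm x)\<^sup>2)"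

lemma ripD:
  "rip A t m M \<Longrightarrow> l0 x \<le> t \<Longrightarrow> m * (norm x)\<^sup>2 \<le> (norm (A *v x))\<^sup>2"
  "rip A t m M \<Longrightarrow> l0 x \<le> t \<Longrightarrow> (norm (A *v x))\<^sup>2 \<le> M * (norm x)\<^sup>2"
  by (simp_all add: rip_def)

lemma ric_admissible_exists:
  "\<exists>d\<ge>0. \<forall>x. l0 x \<le> t \<longrightarrow>
     (1 - d) * (norm x)\<^sup>2 \<le> (norm (A *v x))\<^sup>2 \<and> (norm (A *v x))\<^sup>2 \<le> (1 + d) * (norm x)\<^sup>2"
proof -
  obtain K where "\<And>x. norm (A *v x) \<le> norm x * K"
    using bounded_linear.pos_bounded[OF matrix_vector_mul_bounded_linear[of A]] by blast
  then have bound: "(norm (A *v x))\<^sup>2 \<le> K\<^sup>2 * (norm x)\<^sup>2" for x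
    by (metis mult.commute norm_ge_zero power_mono power_mult_distrib)
  have "(1 - (K\<^sup>2 + 1)) * (norm x)\<^sup>2 \<le> (norm (A *v x))\<^sup>2 \<and>
      (norm (A *v x))\<^sup>2 \<le> (1 + (K\<^sup>2 + 1)) * (norm x)\<^sup>2" for x
  proof
    have "(1 - (K\<^sup>2 + 1)) * (norm x)\<^sup>2 \<le> 0" by simp
    then show "(1 - (K\<^sup>2 + 1)) * (norm x)\<^sup>2 \<le> (norm (A *v x))\<^sup>2"
      using zero_le_power2 order_trans by blast
    have "K\<^sup>2 * (norm x)\<^sup>2 \<le> (1 + (K\<^sup>2 + 1)) * (norm x)\<^sup>2"
      by (intro mult_right_mono) auto
    then show "(norm (A *v x))\<^sup>2 \<le> (1 + (K\<^sup>2 + 1)) * (norm x)\<^sup>2"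
      using bound[of x] by linarith
  qed
  then show ?thesis
    by (intro exI[of _ "K\<^sup>2 + 1"]) simp
qed

lemma rip_ric: "rip A t (1 - ric A t) (1 + ric A t)"
proof -
  define D where "D = {d. 0 \<le> d \<and> (\<forall>x. l0 x \<le> t \<longrightarrow>
        (1 - d) * (norm x)\<^sup>2 \<le> (norm (A *v x))\<^sup>2 \<and> (norm (A *v x))\<^sup>2 \<le> (1 + d) * (norm x)\<^sup>2)}"
  have "D \<noteq> {}"
    using ric_admissible_exists[of t A] by (auto simp: D_def)
  have "\<bar>(norm (A *v x))\<^sup>2 - (norm x)\<^sup>2\<bar> \<le> ric A t * (norm x)\<^sup>2" if "l0 x \<le> t" for x
  proof (cases "x = 0")
    case False
    then have nx: "0 < (norm x)\<^sup>2" by simp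
    have "\<bar>(norm (A *v x))\<^sup>2 - (norm x)\<^sup>2\<bar> / (norm x)\<^sup>2 \<le> Inf D"
    proof (rule cInf_greatest[OF \<open>D \<noteq> {}\<close>])
      fix d assume "d \<in> D"
      then have "\<bar>(norm (A *v x))\<^sup>2 - (norm x)\<^sup>2\<bar> \<le> d * (norm x)\<^sup>2"
        using that by (auto simp: D_def abs_le_iff algebra_simps)
      then show "\<bar>(norm (A *v x))\<^sup>2 - (norm x)\<^sup>2\<bar> / (norm x)\<^sup>2 \<le> d"
        using nx by (simp add: pos_divide_le_eq)
    qed
    then show ?thesis
      using nx by (simp add: ric_def D_def[symmetric] pos_divide_le_eq)
  qed simp
  then show ?thesis
    by (auto simp: rip_def abs_le_iff algebra_simps)
qed

lemma ric_0: "ric (A :: real^'n^'m) 0 = 0"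
proof -
  have zero: "l0 x = 0 \<Longrightarrow> x = (0 :: real^'n)" for x
    by (auto simp: l0_def vec_eq_iff)
  have "{d. 0 \<le> d \<and> (\<forall>x::real^'n. l0 x \<le> 0 \<longrightarrow>
      (1 - d) * (norm x)\<^sup>2 \<le> (norm (A *v x))\<^sup>2 \<and> (norm (A *v x))\<^sup>2 \<le> (1 + d) * (norm x)\<^sup>2)} = {0..}"
    by (auto dest: zero)
  then show ?thesis by (simp add: ric_def)
qed

lemma subspace_supp_subset: "subspace {z :: real^'n. supp z \<subseteq> T}"
  by (auto simp: subspace_def supp_subset_iff)

definition restricted_stationary :: "real^'n^'m \<Rightarrow> real^'m \<Rightarrow> 'n set \<Rightarrow> real^'n \<Rightarrow> bool" where
  "restricted_stationary A b T z \<longleftrightarrow> supp z \<subseteq> T \<and> (\<forall>i\<in>T. lsq_grad A b z $ i = 0)"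

lemma restricted_stationary_exists:
  fixes A :: "real^'n^'m"
  shows "\<exists>z. restricted_stationary A b T z"
proof -
  let ?V = "{z :: real^'n. supp z \<subseteq> T}"
  have "subspace ((*v) A ` ?V)"
    using linear_subspace_image matrix_vector_mul_linear subspace_supp_subset by blast
  then have span: "span ((*v) A ` ?V) = (*v) A ` ?V" by (rule span_eq_iff[THEN iffD2])
  obtain y r where "y \<in> span ((*v) A ` ?V)" and "b = y + r"
    and r: "\<And>w. w \<in> span ((*v) A ` ?V) \<Longrightarrow> orthogonal r w"
    using orthogonal_subspace_decomp_exists by blast
  then obtain z where z: "supp z \<subseteq> T" and "b = A *v z + r" by (auto simp: span)
  have "lsq_grad A b z $ i = 0" if "i \<in> T" for i
  proof -
    have "supp (axis i 1 :: real^'n) \<subseteq> T" using that by (auto simp: supp_def axis_def)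
    then have "orthogonal r (A *v axis i 1)" by (intro r) (auto simp: span)
    have "lsq_grad A b z $ i = axis i 1 \<bullet> (transpose A *v (- r))"
      by (simp add: lsq_grad_def \<open>b = A *v z + r\<close> inner_axis')
    also have "\<dots> = - (r \<bullet> (A *v axis i 1))"
      by (simp only: inner_transpose_mv inner_minus_right inner_commute[of _ r])
    finally show ?thesis using \<open>orthogonal r (A *v axis i 1)\<close> by (simp add: orthogonal_def)
  qed
  then show ?thesis using z by (auto simp: restricted_stationary_def)
qed

lemma restricted_stationary_unique:
  assumes "rip A t m M" "0 < m" "card T \<le> t"
    and "restricted_stationary A b T z" "restricted_stationary A b T z'"
  shows "z = z'"
proof -
  have supp: "supp (z - z') \<subseteq> T"
    using assms(4,5) unfolding restricted_stationary_def supp_subset_iff by simp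
  have "(norm (A *v (z - z')))\<^sup>2 = (z - z') \<bullet> (lsq_grad A b z - lsq_grad A b z')"
    using lsq_grad_add[of A b z' "z - z'"] by (simp add: inner_lsq_hess power2_norm_eq_inner)
  also have "\<dots> = 0"
    using supp assms(4,5) by (intro inner_eq_0_if_supp_subset) (auto simp: restricted_stationary_def)
  finally have "m * (norm (z - z'))\<^sup>2 \<le> 0"
    using ripD(1)[OF assms(1) order_trans[OF l0_le_card[OF supp] assms(3)]] by simp
  then show ?thesis using \<open>0 < m\<close> by (simp add: mult_le_0_iff)
qed

lemma newton_dir_iff_restricted_stationary:
  "newton_dir A b x T d \<longleftrightarrow> restricted_stationary A b T (x + d)"
proof -
  let ?H = "lsq_hess A"
  have off: "(\<forall>i\<in>-T. d $ i = - x $ i) \<longleftrightarrow> supp (x + d) \<subseteq> T"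
    by (auto simp: supp_subset_iff add_eq_0_iff)
  have Hd: "(?H *v d) $ i = (\<Sum>j\<in>T. ?H $ i $ j * d $ j) - (\<Sum>j\<in>-T. ?H $ i $ j * x $ j)"
    if "\<forall>j\<in>-T. d $ j = - x $ j" for i
    using that by (simp add: matrix_vector_mult_def sum_Compl_split[of _ T] sum_negf[symmetric])
  have "(\<forall>i\<in>T. (\<Sum>j\<in>T. ?H $ i $ j * d $ j) = (\<Sum>j\<in>-T. ?H $ i $ j * x $ j) - lsq_grad A b x $ i)
      \<longleftrightarrow> (\<forall>i\<in>T. lsq_grad A b (x + d) $ i = 0)"
    if "\<forall>j\<in>-T. d $ j = - x $ j"
    using Hd[OF that] by (auto simp: lsq_grad_add)
  then show ?thesis
    unfolding newton_dir_def restricted_stationary_def off[symmetric] by blast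
qed

lemma newton_dir_ex1:
  assumes "rip A t m M" "0 < m" "card T \<le> t"
  shows "\<exists>!d. newton_dir A b x T d"
proof -
  obtain z where "restricted_stationary A b T z"
    using restricted_stationary_exists by blast
  then have "newton_dir A b x T (z - x)"
    by (simp add: newton_dir_iff_restricted_stationary)
  moreover have "d = d'" if "newton_dir A b x T d" "newton_dir A b x T d'" for d d'
    using restricted_stationary_unique[OF assms] that
    by (metis add_left_cancel newton_dir_iff_restricted_stationary)
  ultimately show ?thesis by blast
qed

lemma newton_dir_inner_grad:
  assumes "newton_dir A b x T d" "supp w \<subseteq> T"
  shows "lsq_grad A b x \<bullet> w = - ((A *v d) \<bullet> (A *v w))"
proof -
  have "w \<bullet> lsq_grad A b (x + d) = 0"
    using assms by (intro inner_eq_0_if_supp_subset)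
      (auto simp: newton_dir_iff_restricted_stationary restricted_stationary_def)
  then show ?thesis
    by (simp add: lsq_grad_add inner_add_right inner_lsq_hess inner_commute)
qed

lemma norm_diff_scaleR_sq:
  fixes u v :: "'a::real_inner"
  shows "(norm (u - t *\<^sub>R v))\<^sup>2 = (norm u)\<^sup>2 - 2 * t * (u \<bullet> v) + t\<^sup>2 * (norm v)\<^sup>2"
  unfolding power2_norm_eq_inner
  by (simp add: inner_diff_left inner_diff_right inner_commute power2_eq_square algebra_simps)

lemma young_inner:
  fixes u v :: "'a::real_inner"
  assumes "0 < M"
  shows "2 * (u \<bullet> v) \<le> (norm u)\<^sup>2 / M + M * (norm v)\<^sup>2"
proof -
  have "0 \<le> (norm u)\<^sup>2 - 2 * M * (u \<bullet> v) + M\<^sup>2 * (norm v)\<^sup>2"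
    by (metis norm_diff_scaleR_sq zero_le_power2)
  moreover have "M * ((norm u)\<^sup>2 / M + M * (norm v)\<^sup>2) = (norm u)\<^sup>2 + M\<^sup>2 * (norm v)\<^sup>2"
    using assms by (simp add: field_simps power2_eq_square)
  ultimately have "M * (2 * (u \<bullet> v)) \<le> M * ((norm u)\<^sup>2 / M + M * (norm v)\<^sup>2)"
    by simp
  then show ?thesis using assms by simp
qed

lemma proj_s_tail_le:
  assumes "z \<in> proj_s s y" "supp z \<subseteq> T" "card K \<le> s"
  shows "(\<Sum>i\<in>-T. (y $ i)\<^sup>2) \<le> (\<Sum>i\<in>-K. (y $ i)\<^sup>2)"
proof -
  have "supp (restrict_vec K y) \<subseteq> K" by (auto simp: supp_def)
  then have "l0 (restrict_vec K y) \<le> s"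
    using l0_le_card assms(3) order_trans by blast
  then have "norm (y - z) \<le> norm (y - restrict_vec K y)"
    using assms(1) by (simp add: proj_s_def)
  moreover have "y - restrict_vec K y = restrict_vec (-K) y"
    by (simp add: vec_eq_iff)
  ultimately have "(norm (y - z))\<^sup>2 \<le> (\<Sum>i\<in>-K. (y $ i)\<^sup>2)"
    by (metis norm_ge_zero norm_restrict_vec_sq power_mono)
  moreover have "(\<Sum>i\<in>-T. (y $ i)\<^sup>2) = (\<Sum>i\<in>-T. ((y - z) $ i)\<^sup>2)"
    using assms(2) by (intro sum.cong) (auto simp: supp_subset_iff)
  moreover have "(\<Sum>i\<in>-T. ((y - z) $ i)\<^sup>2) \<le> (norm (y - z))\<^sup>2"
    unfolding norm_sq_eq_sum by (intro sum_mono2) auto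
  ultimately show ?thesis by linarith
qed

lemma l0_le_double:
  assumes "supp w \<subseteq> T \<union> supp x" "card T \<le> s" "l0 x \<le> s"
  shows "l0 w \<le> 2 * s"
proof -
  have "l0 w \<le> card (T \<union> supp x)" by (rule l0_le_card[OF assms(1)])
  also have "\<dots> \<le> card T + card (supp x)" by (rule card_Un_le)
  finally show ?thesis using assms(2,3) by (simp add: l0_eq_card_supp)
qed

lemma newton_dir_sum_grad_on:
  assumes "newton_dir A b x T d"
  shows "(\<Sum>i\<in>T. lsq_grad A b x $ i * d $ i)
    = (A *v restrict_vec (-T) d) \<bullet> (A *v d) - (norm (A *v d))\<^sup>2"
proof -
  have "(\<Sum>i\<in>T. lsq_grad A b x $ i * d $ i) = lsq_grad A b x \<bullet> restrict_vec T d"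
    by (simp add: inner_restrict_vec)
  also have "\<dots> = - ((A *v d) \<bullet> (A *v restrict_vec T d))"
    by (rule newton_dir_inner_grad[OF assms]) (auto simp: supp_def)
  also have "restrict_vec T d = d - restrict_vec (-T) d"
    by (simp add: vec_eq_iff)
  finally show ?thesis
    by (simp add: matrix_vector_mult_diff_distrib inner_diff_right inner_commute power2_norm_eq_inner)
qed

lemma newton_accept_if_rip:
  assumes rip: "rip A (2 * s) m M" and mM: "3 * m + M \<le> 4" and \<eta>: "0 < \<eta>" "\<eta> \<le> 1/4"
    and x: "l0 x \<le> s" and T: "card T \<le> s" and nd: "newton_dir A b x T d"
  shows "newton_accept A b m \<eta> x T d"
proof -
  have off: "\<forall>i\<in>-T. d $ i = - x $ i"
    using nd by (simp add: newton_dir_def)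
  define v where "v = restrict_vec (-T) d"
  \<comment> \<open>RIP at \<open>d - v/2\<close> gives \<open>|Ad|^2 - (Av).(Ad) \<ge> m |d|^2 - (3m + M)/4 |v|^2\<close>.\<close>
  define e where "e = d - (1/2) *\<^sub>R v"
  have "supp v \<subseteq> T \<union> supp x" and "supp e \<subseteq> T \<union> supp x"
    using off by (auto simp: v_def e_def supp_def)
  then have "l0 v \<le> 2 * s" and "l0 e \<le> 2 * s"
    using l0_le_double x T by blast+
  then have "(norm (A *v v))\<^sup>2 \<le> M * (norm v)\<^sup>2" and "m * (norm e)\<^sup>2 \<le> (norm (A *v e))\<^sup>2"
    using ripD[OF rip] by blast+
  moreover have "(norm (A *v e))\<^sup>2 = (norm (A *v d))\<^sup>2 - (A *v v) \<bullet> (A *v d) + (norm (A *v v))\<^sup>2 / 4"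
    unfolding e_def matrix_vector_mult_diff_distrib matrix_vector_mult_scaleR norm_diff_scaleR_sq
    by (simp add: inner_commute power2_eq_square)
  moreover have "d \<bullet> v = (norm v)\<^sup>2"
    unfolding v_def inner_restrict_vec norm_restrict_vec_sq by (simp add: power2_eq_square)
  then have "(norm e)\<^sup>2 = (norm d)\<^sup>2 - 3/4 * (norm v)\<^sup>2"
    unfolding e_def norm_diff_scaleR_sq by (simp add: power2_eq_square)
  moreover have "(\<Sum>i\<in>-T. (x $ i)\<^sup>2) = (norm v)\<^sup>2"
    using off by (simp add: v_def norm_restrict_vec_sq)
  moreover have "(3 * m + M) * (norm v)\<^sup>2 \<le> 4 * (norm v)\<^sup>2"
    using mM by (simp add: mult_right_mono)
  moreover have "1 \<le> 1 / (4 * \<eta>)"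
    using \<eta> by (simp add: field_simps)
  then have "(norm v)\<^sup>2 \<le> 1 / (4 * \<eta>) * (norm v)\<^sup>2"
    using mult_right_mono[of 1 _ "(norm v)\<^sup>2"] by (metis mult_1 zero_le_power2)
  ultimately show ?thesis
    unfolding newton_accept_def newton_dir_sum_grad_on[OF nd, folded v_def]
    by (simp add: algebra_simps)
qed

lemma Tset_tail_bound:
  assumes "T \<in> Tset A b s \<eta> x" "l0 x \<le> s"
  shows "(\<Sum>i\<in>-T. (x $ i)\<^sup>2) - 2 * \<eta> * (\<Sum>i\<in>-T. lsq_grad A b x $ i * x $ i)
    \<le> \<eta>\<^sup>2 * (\<Sum>i\<in>T. (lsq_grad A b x $ i)\<^sup>2)"
proof -
  let ?g = "lsq_grad A b x"
  define y where "y = x - \<eta> *\<^sub>R ?g"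
  obtain z where "z \<in> proj_s s y" "supp z \<subseteq> T"
    using assms(1) by (auto simp: Tset_def y_def)
  then have "(\<Sum>i\<in>-T. (y $ i)\<^sup>2) \<le> (\<Sum>i\<in>-supp x. (y $ i)\<^sup>2)"
    using assms(2) by (intro proj_s_tail_le) (simp_all add: l0_eq_card_supp)
  also have "\<dots> = (\<Sum>i\<in>-supp x. \<eta>\<^sup>2 * (?g $ i)\<^sup>2)"
    by (intro sum.cong) (auto simp: y_def supp_def power_mult_distrib)
  also have "\<dots> \<le> (\<Sum>i\<in>UNIV. \<eta>\<^sup>2 * (?g $ i)\<^sup>2)"
    by (intro sum_mono2) auto
  also have "\<dots> = \<eta>\<^sup>2 * (\<Sum>i\<in>T. (?g $ i)\<^sup>2) + \<eta>\<^sup>2 * (\<Sum>i\<in>-T. (?g $ i)\<^sup>2)"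
    by (simp add: sum_Compl_split[of _ T] sum_distrib_left)
  finally show ?thesis
    by (simp add: y_def power2_eq_square sum.distrib sum_subtractf sum_distrib_left algebra_simps)
qed

lemma rip_inner_le:
  assumes "rip A t m M" "0 < M" "l0 w \<le> t"
  shows "2 * c * ((A *v w) \<bullet> u) \<le> (norm w)\<^sup>2 + M * c\<^sup>2 * (norm u)\<^sup>2"
proof -
  have "(norm (A *v w))\<^sup>2 / M \<le> (norm w)\<^sup>2"
    using ripD(2)[OF assms(1,3)] assms(2) by (simp add: pos_divide_le_eq mult.commute)
  then show ?thesis
    using young_inner[OF assms(2), of "A *v w" "c *\<^sub>R u"]
    by (simp add: power_mult_distrib algebra_simps)
qed

lemma newton_dir_grad_on_le:
  assumes rip: "rip A (2 * s) m M" and M: "0 < M"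
    and x: "l0 x \<le> s" and T: "card T \<le> s" and nd: "newton_dir A b x T d"
  shows "(\<Sum>i\<in>T. (lsq_grad A b x $ i)\<^sup>2) \<le> M * (norm (A *v d))\<^sup>2"
proof -
  define gT where "gT = restrict_vec T (lsq_grad A b x)"
  have "supp gT \<subseteq> T"
    by (auto simp: gT_def supp_def)
  then have "lsq_grad A b x \<bullet> gT = - ((A *v d) \<bullet> (A *v gT))"
    by (rule newton_dir_inner_grad[OF nd])
  moreover have "l0 gT \<le> 2 * s"
    using l0_le_double[OF _ T x] \<open>supp gT \<subseteq> T\<close> by blast
  then have "2 * 1 * ((A *v gT) \<bullet> - (A *v d)) \<le> (norm gT)\<^sup>2 + M * 1\<^sup>2 * (norm (- (A *v d)))\<^sup>2"
    by (rule rip_inner_le[OF rip M])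
  moreover have "lsq_grad A b x \<bullet> gT = (\<Sum>i\<in>T. (lsq_grad A b x $ i)\<^sup>2)"
    by (simp add: gT_def inner_restrict_vec power2_eq_square)
  moreover have "(norm gT)\<^sup>2 = (\<Sum>i\<in>T. (lsq_grad A b x $ i)\<^sup>2)"
    unfolding gT_def by (rule norm_restrict_vec_sq)
  ultimately show ?thesis
    by (simp add: inner_commute)
qed

lemma newton_descent_if_rip:
  assumes rip: "rip A (2 * s) m M" and M: "0 < M" and \<eta>: "0 < \<eta>"
    and x: "l0 x \<le> s" and T: "T \<in> Tset A b s \<eta> x" and nd: "newton_dir A b x T d"
  shows "lsq_grad A b x \<bullet> d \<le> - (1 - M * \<eta>) * (norm (A *v d))\<^sup>2"
proof -
  let ?g = "lsq_grad A b x"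
  define v where "v = restrict_vec (-T) d"
  define a where "a = (norm (A *v d))\<^sup>2"
  define p where "p = (A *v v) \<bullet> (A *v d)"
  define X where "X = (\<Sum>i\<in>-T. ?g $ i * x $ i)"
  define G where "G = (\<Sum>i\<in>T. (?g $ i)\<^sup>2)"
  have off: "\<forall>i\<in>-T. d $ i = - x $ i"
    using nd by (simp add: newton_dir_def)
  have cardT: "card T \<le> s"
    using T by (simp add: Tset_def)
  have "supp v \<subseteq> T \<union> supp x"
    using off by (auto simp: v_def supp_def)
  then have "2 * \<eta> * p \<le> (norm v)\<^sup>2 + M * \<eta>\<^sup>2 * a"
    unfolding p_def a_def by (intro rip_inner_le[OF rip M] l0_le_double[OF _ cardT x])
  moreover have "\<eta>\<^sup>2 * G \<le> \<eta>\<^sup>2 * (M * a)"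
    using newton_dir_grad_on_le[OF rip M x cardT nd] by (simp add: G_def a_def mult_left_mono)
  moreover have "(norm v)\<^sup>2 - 2 * \<eta> * X \<le> \<eta>\<^sup>2 * G"
    using Tset_tail_bound[OF T x] off by (simp add: v_def X_def G_def norm_restrict_vec_sq)
  moreover have "?g \<bullet> d = (\<Sum>i\<in>T. ?g $ i * d $ i) + (\<Sum>i\<in>-T. ?g $ i * d $ i)"
    by (simp add: inner_vec_def sum_Compl_split[of _ T])
  then have gd: "?g \<bullet> d = p - a - X"
    using off by (simp add: newton_dir_sum_grad_on[OF nd] v_def p_def a_def X_def sum_negf)
  ultimately have "2 * \<eta> * (?g \<bullet> d) \<le> 2 * \<eta> * (- (1 - M * \<eta>) * a)"
    unfolding gd by (simp add: power2_eq_square algebra_simps)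
  then show ?thesis
    using \<eta> by (simp add: a_def)
qed

lemma step_pt_newton_dir: "newton_dir A b x T d \<Longrightarrow> step_pt x T d 1 = x + d"
  by (auto simp: step_pt_def newton_dir_def vec_eq_iff)

lemma armijo_unit_step:
  assumes "newton_dir A b x T d" "lsq_grad A b x \<bullet> d \<le> - c * (norm (A *v d))\<^sup>2"
    and "0 \<le> 1 - \<sigma>" "1/2 \<le> (1 - \<sigma>) * c"
  shows "armijo A b \<sigma> x T d 1"
proof -
  have "(1 - \<sigma>) * (lsq_grad A b x \<bullet> d) \<le> (1 - \<sigma>) * (- c * (norm (A *v d))\<^sup>2)"
    using assms(2,3) by (rule mult_left_mono)
  also have "\<dots> \<le> - (1/2) * (norm (A *v d))\<^sup>2"
    using assms(4) mult_right_mono[OF assms(4) zero_le_power2[of "norm (A *v d)"]] by simp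
  finally show ?thesis
    unfolding armijo_def step_pt_newton_dir[OF assms(1)] lsq_f_add by (simp add: algebra_simps)
qed

lemma lsq_f_newton_decrease:
  assumes "rip A (2 * s) m M" "0 < m" "l0 x \<le> s" "card T \<le> s" "newton_dir A b x T d" "d \<noteq> 0"
    and "lsq_grad A b x \<bullet> d \<le> - c * (norm (A *v d))\<^sup>2" "1/2 < c"
  shows "lsq_f A b (x + d) < lsq_f A b x"
proof -
  have "supp d \<subseteq> T \<union> supp x"
    using assms(5) by (auto simp: newton_dir_def supp_def)
  then have "m * (norm d)\<^sup>2 \<le> (norm (A *v d))\<^sup>2"
    using ripD(1)[OF assms(1)] l0_le_double assms(3,4) by blast
  moreover have "0 < m * (norm d)\<^sup>2"
    using assms(2,6) by simp
  ultimately have "(1/2) * (norm (A *v d))\<^sup>2 < c * (norm (A *v d))\<^sup>2"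
    using assms(8) by (intro mult_strict_right_mono) auto
  then show ?thesis
    using assms(7) by (simp add: lsq_f_add)
qed

lemma kth_abs_ge:
  fixes x :: "real^'n"
  assumes "card T = s" "1 \<le> s" "\<forall>k\<in>T. c \<le> \<bar>x $ k\<bar>"
  shows "c \<le> kth_abs x s"
proof (rule ccontr)
  assume "\<not> c \<le> kth_abs x s"
  define L where "L = sorted_list_of_multiset (image_mset (\<lambda>i. \<bar>x $ i\<bar>) (mset_set (UNIV :: 'n set)))"
  define n where "n = CARD('n)"
  have mL: "mset L = image_mset (\<lambda>i. \<bar>x $ i\<bar>) (mset_set UNIV)"
    by (simp add: L_def)
  have len: "length L = n"
    using arg_cong[OF mL, of size] by (simp add: n_def)
  have sn: "s \<le> n"
    using assms(1) card_mono[of UNIV T] by (simp add: n_def)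
  have "kth_abs x s = L ! (n - s)"
    using assms(2) sn len by (simp add: kth_abs_def L_def[symmetric] rev_nth)
  then have lt: "L ! (n - s) < c"
    using \<open>\<not> c \<le> kth_abs x s\<close> by simp
  have "{i. i < length L \<and> c \<le> L ! i} \<subseteq> {n - s + 1..<n}"
  proof
    fix i assume i: "i \<in> {i. i < length L \<and> c \<le> L ! i}"
    have "\<not> i \<le> n - s"
    proof
      assume "i \<le> n - s"
      then have "L ! i \<le> L ! (n - s)"
        using sorted_nth_mono[of L] assms(2) sn len by (simp add: L_def)
      then show False using i lt by simp
    qed
    then show "i \<in> {n - s + 1..<n}" using i len by auto
  qed
  then have "length (filter (\<lambda>v. c \<le> v) L) \<le> s - 1"
    using card_mono[of "{n - s + 1..<n}"] assms(2) sn by (simp add: length_filter_conv_card)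
  moreover have "length (filter (\<lambda>v. c \<le> v) L) = size (filter_mset (\<lambda>v. c \<le> v) (mset L))"
    by (metis mset_filter size_mset)
  moreover have "\<dots> = card {i. c \<le> \<bar>x $ i\<bar>}"
    unfolding mL filter_mset_image_mset by (simp add: filter_mset_mset_set)
  moreover have "card T \<le> card {i. c \<le> \<bar>x $ i\<bar>}"
    using assms(3) by (intro card_mono) auto
  ultimately show False
    using assms(1,2) by simp
qed

lemma Tset_swap_bound:
  assumes T: "T \<in> Tset A b s \<eta> x" and rs: "restricted_stationary A b T x" and "0 < \<eta>"
    and i: "i \<notin> T" and j: "j \<in> T"
  shows "\<eta> * \<bar>lsq_grad A b x $ i\<bar> \<le> \<bar>x $ j\<bar>"
proof -
  define y where "y = x - \<eta> *\<^sub>R lsq_grad A b x"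
  define K where "K = insert i (T - {j})"
  obtain z where "z \<in> proj_s s y" "supp z \<subseteq> T"
    using T by (auto simp: Tset_def y_def)
  moreover have "card K \<le> s"
  proof -
    have "card T = s" using T by (simp add: Tset_def)
    moreover have "T \<noteq> {}"
      using j by blast
    ultimately have "card (T - {j}) = s - 1" and "1 \<le> s"
      using j card_gt_0_iff[of T] by simp_all
    then show ?thesis by (simp add: K_def card_insert_if)
  qed
  ultimately have "(\<Sum>k\<in>-T. (y $ k)\<^sup>2) \<le> (\<Sum>k\<in>-K. (y $ k)\<^sup>2)"
    by (rule proj_s_tail_le)
  moreover have "-K = insert j (-T - {i})"
    using i j by (auto simp: K_def)
  then have "(\<Sum>k\<in>-K. (y $ k)\<^sup>2) = (y $ j)\<^sup>2 + (\<Sum>k\<in>-T. (y $ k)\<^sup>2) - (y $ i)\<^sup>2"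
    using i j by (simp add: sum_diff1)
  ultimately have "(y $ i)\<^sup>2 \<le> (y $ j)\<^sup>2"
    by simp
  moreover have "y $ i = - (\<eta> * lsq_grad A b x $ i)" and "y $ j = x $ j"
    using rs i j by (auto simp: y_def restricted_stationary_def supp_def)
  ultimately have "\<bar>\<eta> * lsq_grad A b x $ i\<bar> \<le> \<bar>x $ j\<bar>"
    by (simp add: abs_le_square_iff)
  then show ?thesis
    using \<open>0 < \<eta>\<close> by (simp add: abs_mult)
qed

lemma Tol_eq_0_if_restricted_stationary:
  assumes T: "T \<in> Tset A b s \<eta> x" and rs: "restricted_stationary A b T x"
    and "1 \<le> s" "0 < \<eta>"
  shows "Tol A b s \<eta> x T = 0"
proof -
  have Fvec: "Fvec A b x T = 0"
    using rs by (auto simp: Fvec_def vec_eq_iff restricted_stationary_def supp_def)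
  have "\<bar>lsq_grad A b x $ i\<bar> \<le> kth_abs x s / \<eta>" if "i \<notin> T" for i
  proof -
    have "\<forall>k\<in>T. \<eta> * \<bar>lsq_grad A b x $ i\<bar> \<le> \<bar>x $ k\<bar>"
      using Tset_swap_bound[OF T rs assms(4) that] by blast
    moreover have "card T = s"
      using T by (simp add: Tset_def)
    ultimately have "\<eta> * \<bar>lsq_grad A b x $ i\<bar> \<le> kth_abs x s"
      using kth_abs_ge assms(3) by simp
    then show ?thesis
      using assms(4) by (simp add: pos_le_divide_eq mult.commute)
  qed
  then have "insert 0 ((\<lambda>i. max (\<bar>lsq_grad A b x $ i\<bar> - kth_abs x s / \<eta>) 0) ` (- T)) = {0}"
    by auto
  then show ?thesis
    unfolding Tol_def Fvec by (simp only: Max_singleton norm_zero add_0)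
qed

lemma closed_sparse: "closed {z :: real^'n. l0 z \<le> s}"
proof -
  have "{z :: real^'n. l0 z \<le> s} = (\<Union>K\<in>{K. card K \<le> s}. {z. supp z \<subseteq> K})"
  proof (intro set_eqI iffI)
    fix z :: "real^'n"
    assume "z \<in> {z. l0 z \<le> s}"
    then show "z \<in> (\<Union>K\<in>{K. card K \<le> s}. {z. supp z \<subseteq> K})"
      by (intro UN_I[of "supp z"]) (simp_all add: l0_eq_card_supp)
  next
    fix z :: "real^'n"
    assume "z \<in> (\<Union>K\<in>{K. card K \<le> s}. {z. supp z \<subseteq> K})"
    then show "z \<in> {z. l0 z \<le> s}"
      using l0_le_card order_trans by blast
  qed
  then show ?thesis
    by (simp add: closed_UN closed_subspace subspace_supp_subset)
qed

lemma Tset_nonempty: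
  assumes "s \<le> CARD('n)"
  shows "Tset A b s \<eta> (x :: real^'n) \<noteq> {}"
proof -
  let ?y = "x - \<eta> *\<^sub>R lsq_grad A b x"
  let ?z = "closest_point {z. l0 z \<le> s} ?y"
  have "l0 (0 :: real^'n) \<le> s"
    by (simp add: l0_def)
  then have "l0 ?z \<le> s"
    using closest_point_in_set[OF closed_sparse[of s]] by blast
  moreover have "norm (?y - ?z) \<le> norm (?y - z')" if "l0 z' \<le> s" for z'
    using closest_point_le[OF closed_sparse[of s], of z' ?y] that by (simp add: dist_norm)
  ultimately have "?z \<in> proj_s s ?y"
    by (simp add: proj_s_def)
  moreover have "card (supp ?z) \<le> s"
    using calculation by (simp add: proj_s_def l0_eq_card_supp)
  then obtain T where "supp ?z \<subseteq> T" "card T = s"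
    using exists_subset_between[of "supp ?z" s UNIV] assms by auto
  ultimately show ?thesis
    by (auto simp: Tset_def)
qed

lemma infinite_range_if_strictly_decreasing:
  fixes f :: "'a \<Rightarrow> real"
  assumes "\<And>k. f (X (Suc k)) < f (X k)"
  shows "infinite (range X)"
proof -
  have "strict_mono (\<lambda>k. - f (X k))"
    using assms by (simp add: strict_mono_Suc_iff)
  then have "inj (\<lambda>k. - f (X k))"
    by (rule strict_mono_imp_inj_on)
  then have "inj X"
    by (auto simp: inj_def)
  then show ?thesis
    by (rule range_inj_infinite)
qed

lemma finite_restricted_stationary:
  assumes "rip A t m M" "0 < m" "s \<le> t"
  shows "finite {z. \<exists>T. card T = s \<and> restricted_stationary A b T z}"
proof (rule finite_surj[OF finite])
  show "{z. \<exists>T. card T = s \<and> restricted_stationary A b T z}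
      \<subseteq> (\<lambda>T. THE z. restricted_stationary A b T z) ` {T. card T = s}"
  proof (intro subsetI, elim CollectE exE conjE)
    fix z T
    assume card: "card T = s" and z: "restricted_stationary A b T z"
    have "z' = z" if "restricted_stationary A b T z'" for z'
      using restricted_stationary_unique[OF assms(1,2) _ that z] assms(3) card by simp
    with z have "(THE z. restricted_stationary A b T z) = z"
      by (rule the_equality)
    then show "z \<in> (\<lambda>T. THE z. restricted_stationary A b T z) ` {T. card T = s}"
      using card by (intro rev_image_eqI[of T]) simp_all
  qed
qed

lemma nhtp_iter_l0:
  assumes "nhtp_iter A b s \<eta> \<gamma> \<sigma> \<beta> x T d \<alpha> x'"
  shows "l0 x' \<le> s"
proof -
  have "T \<in> Tset A b s \<eta> x" "x' = step_pt x T d \<alpha>"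
    using assms by (simp_all add: nhtp_iter_def)
  then have "supp x' \<subseteq> T" "card T = s"
    by (auto simp: step_pt_def supp_def Tset_def)
  then show ?thesis
    using l0_le_card by metis
qed

lemma nhtp_reach_l0: "nhtp_reach A b s \<eta> \<gamma> \<sigma> \<beta> x0 x \<Longrightarrow> l0 x0 \<le> s \<Longrightarrow> l0 x \<le> s"
  by (induction rule: nhtp_reach.induct) (auto intro: nhtp_iter_l0)

locale nhtp_rip_parameters =
  fixes A :: "real^'n^'m" and s :: nat and \<eta> \<sigma> m M :: real
  assumes rip: "rip A (2 * s) m M" and m_pos: "0 < m" and M_pos: "0 < M"
    and m_M: "3 * m + M \<le> 4" and eta_pos: "0 < \<eta>" and eta_le: "\<eta> \<le> 1/4"
    and M_eta: "M * \<eta> < 1/2" and sigma_le: "0 \<le> 1 - \<sigma>"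
    and sigma_M_eta: "1/2 \<le> (1 - \<sigma>) * (1 - M * \<eta>)"
begin

lemma newton_step_accepted:
  assumes x: "l0 x \<le> s" and T: "T \<in> Tset A b s \<eta> x" and nd: "newton_dir A b x T d"
  shows "newton_accept A b m \<eta> x T d \<and> armijo A b \<sigma> x T d 1 \<and>
    (d \<noteq> 0 \<longrightarrow> lsq_f A b (x + d) < lsq_f A b x)"
proof -
  have card: "card T \<le> s"
    using T by (simp add: Tset_def)
  have descent: "lsq_grad A b x \<bullet> d \<le> - (1 - M * \<eta>) * (norm (A *v d))\<^sup>2"
    by (rule newton_descent_if_rip[OF rip M_pos eta_pos x T nd])
  have "1/2 < 1 - M * \<eta>"
    using M_eta by simp
  then show ?thesis
    using newton_accept_if_rip[OF rip m_M eta_pos eta_le x card nd]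
      armijo_unit_step[OF nd descent sigma_le sigma_M_eta]
      lsq_f_newton_decrease[OF rip m_pos x card nd _ descent]
    by blast
qed

lemma nhtp_reach_newton_accepted:
  assumes "s \<le> CARD('n)" "l0 x0 \<le> s" "nhtp_reach A b s \<eta> m \<sigma> \<beta> x0 x"
  shows "Tset A b s \<eta> x \<noteq> {} \<and>
    (\<forall>T\<in>Tset A b s \<eta> x. Tol A b s \<eta> x T \<noteq> 0 \<longrightarrow>
       (\<exists>!dN. newton_dir A b x T dN) \<and>
       (\<forall>dN. newton_dir A b x T dN \<longrightarrow>
          newton_accept A b m \<eta> x T dN \<and> (\<exists>l::nat. armijo A b \<sigma> x T dN (\<beta> ^ l))))"
proof -
  have x: "l0 x \<le> s"
    using nhtp_reach_l0[OF assms(3,2)] .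
  have "\<exists>!dN. newton_dir A b x T dN" if "T \<in> Tset A b s \<eta> x" for T
    using newton_dir_ex1[OF rip m_pos] that by (simp add: Tset_def)
  \<comment> \<open>No condition on \<open>\<beta>\<close> is needed: the unit step \<open>\<beta> ^ 0\<close> is accepted.\<close>
  moreover have "newton_accept A b m \<eta> x T dN \<and> armijo A b \<sigma> x T dN (\<beta> ^ 0)"
    if "T \<in> Tset A b s \<eta> x" "newton_dir A b x T dN" for T dN
    using newton_step_accepted[OF x that] by simp
  ultimately show ?thesis
    using Tset_nonempty[OF assms(1)] by blast
qed

lemma nhtp_iter_newton_step:
  assumes "1 \<le> s" and x: "l0 x \<le> s" and it: "nhtp_iter A b s \<eta> m \<sigma> \<beta> x T d \<alpha> x'"
  shows "newton_dir A b x T d \<and> \<alpha> = 1 \<and> x' = x + d \<and> lsq_f A b x' < lsq_f A b x"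
proof -
  have T: "T \<in> Tset A b s \<eta> x" and Tol: "Tol A b s \<eta> x T \<noteq> 0"
    and dir: "nhtp_dir A b m \<eta> x T d" and x': "x' = step_pt x T d \<alpha>"
    and \<alpha>: "\<alpha> = \<beta> ^ (LEAST l. armijo A b \<sigma> x T d (\<beta> ^ l))"
    using it by (simp_all add: nhtp_iter_def)
  have "card T \<le> 2 * s"
    using T by (simp add: Tset_def)
  then obtain dN where "newton_dir A b x T dN"
    using newton_dir_ex1[OF rip m_pos] by blast
  then have nd: "newton_dir A b x T d"
    using dir newton_step_accepted[OF x T] unfolding nhtp_dir_def by blast
  note step = newton_step_accepted[OF x T nd]
  have "\<alpha> = 1"
    using step by (simp add: \<alpha> Least_eq_0)
  moreover have "d \<noteq> 0"
  proof
    assume "d = 0"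
    then have "restricted_stationary A b T x"
      using nd by (simp add: newton_dir_iff_restricted_stationary)
    then show False
      using Tol_eq_0_if_restricted_stationary[OF T _ \<open>1 \<le> s\<close> eta_pos] Tol by blast
  qed
  ultimately show ?thesis
    using nd step x' step_pt_newton_dir[OF nd] by auto
qed

lemma nhtp_no_infinite_run:
  assumes "1 \<le> s" "l0 (xs 0) \<le> s"
  shows "\<not> (\<forall>k. nhtp_iter A b s \<eta> m \<sigma> \<beta> (xs k) (Ts k) (ds k) (\<alpha>s k) (xs (Suc k)))"
proof
  assume run: "\<forall>k. nhtp_iter A b s \<eta> m \<sigma> \<beta> (xs k) (Ts k) (ds k) (\<alpha>s k) (xs (Suc k))"
  have sparse: "l0 (xs k) \<le> s" for k
  proof (cases k)
    case (Suc j)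
    then show ?thesis
      using nhtp_iter_l0[OF run[rule_format, of j]] by simp
  qed (simp add: assms(2))
  have step: "card (Ts k) = s \<and> restricted_stationary A b (Ts k) (xs (Suc k)) \<and>
      lsq_f A b (xs (Suc k)) < lsq_f A b (xs k)" for k
  proof -
    have "card (Ts k) = s"
      using run by (simp add: nhtp_iter_def Tset_def)
    moreover have "newton_dir A b (xs k) (Ts k) (ds k) \<and> xs (Suc k) = xs k + ds k \<and>
        lsq_f A b (xs (Suc k)) < lsq_f A b (xs k)"
      using nhtp_iter_newton_step[OF assms(1) sparse] run by blast
    ultimately show ?thesis
      by (auto simp: newton_dir_iff_restricted_stationary)
  qed
  then have "infinite (range (\<lambda>k. xs (Suc k)))"
    by (intro infinite_range_if_strictly_decreasing[of "lsq_f A b"]) blast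
  moreover have "range (\<lambda>k. xs (Suc k)) \<subseteq> {z. \<exists>T. card T = s \<and> restricted_stationary A b T z}"
    using step by blast
  then have "finite (range (\<lambda>k. xs (Suc k)))"
    by (rule finite_subset) (rule finite_restricted_stationary[OF rip m_pos], simp)
  ultimately show False
    by contradiction
qed

end

lemma condition_number_eta_bound:
  fixes m M \<eta> w :: real
  assumes "0 < m" "m \<le> 1" "1 \<le> M" "0 < w" "\<eta> \<le> w / (8 * (M / m)\<^sup>2)"
  shows "M * \<eta> \<le> w / 8" and "\<eta> \<le> w / 8"
proof -
  define \<mu> where "\<mu> = M / m"
  have "M \<le> \<mu>"
    using assms(1-3) by (simp add: \<mu>_def le_divide_eq mult_left_le)
  then have "1 \<le> \<mu>"
    using assms(3) by linarith
  then have "M * 1 \<le> \<mu> * \<mu>"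
    using \<open>M \<le> \<mu>\<close> assms(3) by (intro mult_mono) auto
  then have "M \<le> \<mu>\<^sup>2" and "0 < M * \<mu>\<^sup>2" and "0 < \<mu>\<^sup>2 * 1"
    using assms(3) by (simp_all add: power2_eq_square)
  then have "w / (8 * \<mu>\<^sup>2) \<le> w / (8 * M)" and "w / (8 * \<mu>\<^sup>2) \<le> w / (8 * 1)"
    using assms(3,4) \<open>M \<le> \<mu>\<^sup>2\<close> by (intro divide_left_mono; simp)+
  then have "\<eta> \<le> w / (8 * M)" and "\<eta> \<le> w / 8"
    using assms(5) by (simp_all add: \<mu>_def)
  then have "M * \<eta> \<le> M * (w / (8 * M))"
    using assms(3) by (intro mult_left_mono) auto
  then show "M * \<eta> \<le> w / 8"
    using assms(3) by simp
  show "\<eta> \<le> w / 8" by fact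
qed

lemma condition_number_sigma_bound:
  fixes \<mu> w :: real
  assumes "1 \<le> \<mu>" "0 < w" "w < 1"
  shows "1 / (2 - w) \<le> 1 - (1 - w) / (2 - w / \<mu>)"
proof -
  have "w * 1 \<le> w * \<mu>"
    using assms by (intro mult_left_mono) auto
  then have "w / \<mu> \<le> w"
    using assms(1) by (simp add: divide_le_eq)
  then have "(1 - w) / (2 - w / \<mu>) \<le> (1 - w) / (2 - w)"
    using assms(2,3) by (intro divide_left_mono mult_pos_pos) auto
  then show ?thesis
    using assms(2,3) by (simp add: field_simps)
qed

lemma nhtp_rip_parameters_if_ric:
  fixes A :: "real^'n^'m"
  assumes \<delta>: "0 < ric A (2 * s)" "ric A (2 * s) < 1"
    and m: "m = 1 - ric A (2 * s)" and M: "M = 1 + ric A (2 * s)" and \<mu>: "\<mu> = M / m"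
    and w: "0 < w" "w < 1" and \<sigma>: "\<sigma> = (1 - w) / (2 - w / \<mu>)"
    and \<eta>: "0 < \<eta>" "\<eta> \<le> w / (8 * \<mu>\<^sup>2)"
  shows "nhtp_rip_parameters A s \<eta> \<sigma> m M"
proof -
  have m_pos: "0 < m" and M_ge: "1 \<le> M" and "m \<le> 1" and "3 * m + M \<le> 4"
    using \<delta> m M by auto
  then have "1 \<le> \<mu>"
    using \<mu> by (simp add: le_divide_eq)
  have M_eta: "M * \<eta> \<le> w / 8" and "\<eta> \<le> w / 8"
    using condition_number_eta_bound[OF m_pos \<open>m \<le> 1\<close> M_ge w(1)] \<eta> \<mu> by simp_all
  have \<sigma>_ge: "1 / (2 - w) \<le> 1 - \<sigma>"
    using condition_number_sigma_bound[OF \<open>1 \<le> \<mu>\<close> w] \<sigma> by simp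
  moreover have "0 \<le> 1 / (2 - w)"
    using w by simp
  ultimately have \<sigma>_le: "0 \<le> 1 - \<sigma>"
    by linarith
  have "1 / (2 - w) * (1 - w / 8) \<le> (1 - \<sigma>) * (1 - M * \<eta>)"
    using \<sigma>_ge \<sigma>_le M_eta w by (intro mult_mono) auto
  moreover have "1/2 \<le> 1 / (2 - w) * (1 - w / 8)"
    using w by (simp add: field_simps)
  ultimately have "1/2 \<le> (1 - \<sigma>) * (1 - M * \<eta>)"
    by linarith
  moreover have "rip A (2 * s) m M"
    using rip_ric[of A "2 * s"] by (simp add: m M)
  ultimately show ?thesis
    using m_pos M_ge M_eta \<sigma>_le \<eta> \<open>\<eta> \<le> w / 8\<close> \<open>3 * m + M \<le> 4\<close> w
    by unfold_locales auto
qed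

theorem corollary11:
  fixes A :: "real^'n^'m" and b :: "real^'m" and s :: nat
    and w \<eta> \<sigma> \<beta> \<gamma> m2s M2s mu2s :: real and x0 :: "real^'n"
  assumes s_le: "s \<le> CARD('n)"
    and ric_pos: "0 < ric A (2 * s)" and ric_lt1: "ric A (2 * s) < 1"
    and m2s: "m2s = 1 - ric A (2 * s)" and M2s: "M2s = 1 + ric A (2 * s)"
    and mu2s: "mu2s = M2s / m2s"
    and w: "0 < w" "w < 1"
    and \<beta>: "\<beta> = 1/4"
    and \<sigma>: "\<sigma> = (1 - w) / (2 - w / mu2s)"
    and \<gamma>: "\<gamma> = m2s"
    and \<eta>: "0 < \<eta>" "\<eta> \<le> w / (8 * mu2s^2)"
    and x0: "l0 x0 \<le> s"
  shows
    "(\<forall>x. nhtp_reach A b s \<eta> \<gamma> \<sigma> \<beta> x0 x \<longrightarrow>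
        Tset A b s \<eta> x \<noteq> {} \<and>
        (\<forall>T\<in>Tset A b s \<eta> x. Tol A b s \<eta> x T \<noteq> 0 \<longrightarrow>
           (\<exists>!dN. newton_dir A b x T dN) \<and>
           (\<forall>dN. newton_dir A b x T dN \<longrightarrow>
              newton_accept A b \<gamma> \<eta> x T dN \<and> (\<exists>l::nat. armijo A b \<sigma> x T dN (\<beta> ^ l)))))
     \<and>
     (\<forall>xs Ts ds \<alpha>s xstar.
        xs 0 = x0 \<and>
        (\<forall>k. nhtp_iter A b s \<eta> \<gamma> \<sigma> \<beta> (xs k) (Ts k) (ds k) (\<alpha>s k) (xs (Suc k))) \<and>
        (\<exists>r. strict_mono r \<and> (xs \<circ> r) \<longlonglongrightarrow> xstar)
        \<longrightarrow>
        (xs \<longlonglongrightarrow> xstar \<and> eta_stationary A b s \<eta> xstar) \<and>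
        (\<exists>k0. \<forall>k\<ge>k0. newton_dir A b (xs k) (Ts k) (ds k)) \<and>
        (\<forall>L\<ge>0. \<exists>k0. \<forall>k\<ge>k0.
            \<alpha>s k = 1 \<and>
            norm (xs (Suc k) - xstar) \<le> L / (2 * m2s) * (norm (xs k - xstar))^2 \<and>
            norm (Fvec A b (xs (Suc k)) (Ts (Suc k)))
              \<le> L * sqrt (M2s^2 + 1) / min (m2s^3) m2s * (norm (Fvec A b (xs k) (Ts k)))^2))"
proof -
  have "1 \<le> s"
    using ric_pos ric_0[of A] by (cases s) auto
  interpret nhtp_rip_parameters A s \<eta> \<sigma> m2s M2s
    by (rule nhtp_rip_parameters_if_ric[OF ric_pos ric_lt1 m2s M2s mu2s w \<sigma> \<eta>])
  have no_run: "\<not> (\<forall>k. nhtp_iter A b s \<eta> m2s \<sigma> \<beta> (xs k) (Ts k) (ds k) (\<alpha>s k) (xs (Suc k)))"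
    if "xs 0 = x0" for xs Ts ds \<alpha>s
    using nhtp_no_infinite_run[OF \<open>1 \<le> s\<close>] x0 that by simp
  show ?thesis
    unfolding \<gamma> using nhtp_reach_newton_accepted[OF s_le x0] no_run by blast
qed

end
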